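(* Let $k\ge2$ and $n=2k-1$, and let $\Delta_+$ be the standard $n$-simplex, i.e. the convex hull of the standard basis vectors of $\mathbb R^{n+1}=\mathbb R^{2k}$. There exists a modular block whose outer terminal is $\partial\Delta_+$.
   Context: Let $k\ge2$, $n=2k-1$. A modular block is a set $\Omega=\mathrm{closure}(\Delta_0\setminus\Delta_1\setminus\Delta_2)$ where $\Delta_0$ is an $n$-simplex and $\Delta_1,\Delta_2\subset\Delta_0$ are $n$-simplices with disjoint interiors such that: (1) for any indices $i\neq j$ in $\{0,1,2\}$, $\Delta_i$ and $\Delta_j$ have exactly $k$ common vertices and $\partial\Delta_i\cap\partial\Delta_j$ is the convex hull of these common vertices; (2) there is an order-3 piecewise-linear homeomorphism $\sigma\colon\Omega\to\Omega$ which is affine on each $\partial\Delta_j$ and maps $\partial\Delta_0\to\partial\Delta_1\to\partial\Delta_2\to\partial\Delta_0$. The sets $\partial\Delta_j$ are the terminals; $\partial\Delta_0$ is the outer terminal. *)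

theory Defs
  imports "HOL-Analysis.Analysis"
begin

definition simplex_verts :: "nat \<Rightarrow> ('a::euclidean_space) set \<Rightarrow> bool" where
  "simplex_verts m V \<longleftrightarrow> finite V \<and> card V = m + 1 \<and> \<not> affine_dependent V"

definition affine_on :: "('a::euclidean_space) set \<Rightarrow> ('a \<Rightarrow> 'b::euclidean_space) \<Rightarrow> bool" where
  "affine_on S f \<longleftrightarrow> (\<exists>h c. linear h \<and> (\<forall>x\<in>S. f x = h x + c))"

definition pl_on :: "('a::euclidean_space) set \<Rightarrow> ('a \<Rightarrow> 'a) \<Rightarrow> bool" where
  "pl_on S f \<longleftrightarrow> (\<exists>\<T>. finite \<T> \<and>
      (\<forall>W\<in>\<T>. finite W \<and> W \<noteq> {} \<and> \<not> affine_dependent W \<and> affine_on (convex hull W) f) \<and>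
      \<Union> ((\<lambda>W. convex hull W) ` \<T>) = S)"

text \<open>Boundaries of
simplices are relative boundaries (rel_frontier), interiors relative interiors.\<close>
definition modular_block ::
  "nat \<Rightarrow> ('a::euclidean_space) set \<Rightarrow> 'a set \<Rightarrow> 'a set \<Rightarrow> ('a \<Rightarrow> 'a) \<Rightarrow> bool" where
  "modular_block k V0 V1 V2 \<sigma> \<longleftrightarrow>
     (let V = (\<lambda>i::nat. if i = 0 then V0 else if i = 1 then V1 else V2);
          D = (\<lambda>i. convex hull (V i));
          \<Omega> = closure (D 0 - D 1 - D 2) in
      (\<forall>i\<in>{0,1,2}. simplex_verts (2*k - 1) (V i)) \<and>
      D 1 \<subseteq> D 0 \<and> D 2 \<subseteq> D 0 \<and>
      rel_interior (D 1) \<inter> rel_interior (D 2) = {} \<and>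
      (\<forall>i\<in>{0,1,2}. \<forall>j\<in>{0,1,2}. i \<noteq> j \<longrightarrow>
          card (V i \<inter> V j) = k \<and>
          rel_frontier (D i) \<inter> rel_frontier (D j) = convex hull (V i \<inter> V j)) \<and>
      homeomorphism \<Omega> \<Omega> \<sigma> (\<sigma> \<circ> \<sigma>) \<and>
      (\<forall>x\<in>\<Omega>. \<sigma> (\<sigma> (\<sigma> x)) = x) \<and>
      (\<exists>x\<in>\<Omega>. \<sigma> x \<noteq> x) \<and>
      pl_on \<Omega> \<sigma> \<and>
      (\<forall>i\<in>{0,1,2}. affine_on (rel_frontier (D i)) \<sigma>) \<and>
      \<sigma> ` rel_frontier (D 0) = rel_frontier (D 1) \<and>
      \<sigma> ` rel_frontier (D 1) = rel_frontier (D 2) \<and>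
      \<sigma> ` rel_frontier (D 2) = rel_frontier (D 0))"

end

theory Submission
  imports Defs
begin

text \<open>
  Split the 2k coordinates into pairs (a i, b i), i < k, and add to the vertices e j of the standard
  simplex the k interior points p i with coordinate s at a i and b i and 2s elsewhere. Give p i,
  e (a i), e (b i) the labels (i, 0), (i, 1), (i, 2), with second component in the numeral type
  3 = Z/3. A labelling c gives the cell with vertices {(i, t). t \<noteq> c i}; the constant labellings
  give the three simplices Delta_0, Delta_1, Delta_2, and the cells with c \<noteq> 0 subdivide Delta_0.
  That they do rests on the uniqueness of barycentric coordinates in this subdivision: the
  coordinates of a point x are determined by the total weight W on the points p i, and W is the
  unique relevant solution of s W = (\<Sum>i. max 0 (2 s W - min (x (a i)) (x (b i)))).
  The label rotation t \<mapsto> t + 1 then induces a piecewise affine map sigma of order 3 which cycles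
  Delta_0, Delta_1, Delta_2 and preserves the union Omega of the non-constant cells, and Omega is
  the closure of Delta_0 - Delta_1 - Delta_2.
\<close>

section \<open>Affine maps on affinely independent sets\<close>

lemma affine_on_imp_continuous_on:
  fixes f :: "'a::euclidean_space \<Rightarrow> 'b::euclidean_space"
  assumes "affine_on S f"
  shows "continuous_on S f"
proof -
  obtain h c where h: "linear h" and f: "\<forall>x\<in>S. f x = h x + c"
    using assms by (auto simp: affine_on_def)
  have "continuous_on S (\<lambda>x. h x + c)"
    using h by (intro continuous_intros linear_continuous_on) (simp add: linear_conv_bounded_linear)
  then show ?thesis
    using f by (auto intro: continuous_on_eq)
qed

lemma affine_on_affine_independent:
  fixes g :: "'a::euclidean_space \<Rightarrow> 'b::euclidean_space"
  assumes "\<not> affine_dependent Y"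
  shows "affine_on Y g"
proof (cases "Y = {}")
  case True
  then show ?thesis
    unfolding affine_on_def using linear_zero by blast
next
  case False
  then obtain y0 where y0: "y0 \<in> Y" by blast
  have "\<not> dependent ((+) (- y0) ` (Y - {y0}))"
    using assms unfolding affine_dependent_iff_dependent2[OF y0] .
  then obtain h where h: "linear h" and hY: "\<forall>v\<in>(+) (- y0) ` (Y - {y0}). h v = g (v + y0) - g y0"
    using real_vector.linear_independent_extend[of _ "\<lambda>v. g (v + y0) - g y0"] by blast
  have "g y = h y + (g y0 - h y0)" if "y \<in> Y" for y
  proof (cases "y = y0")
    case False
    then have "h (- y0 + y) = g y - g y0"
      using hY that by auto
    then show ?thesis
      using linear_diff[OF h, of y y0] by (simp add: algebra_simps)
  qed simp
  then show ?thesis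
    unfolding affine_on_def using h by blast
qed

section \<open>A fixed-point equation for sums of hinge functions\<close>

lemma hinge_ratio_mono:
  fixes m V V' r :: real
  assumes "0 < m" "0 < V" "V < V'"
  shows "max 0 (r * V - m) * V' \<le> max 0 (r * V' - m) * V"
    and "0 < r * V - m \<Longrightarrow> max 0 (r * V - m) * V' < max 0 (r * V' - m) * V"
proof -
  have key: "(r * V - m) * V' < (r * V' - m) * V"
    using assms by (simp add: algebra_simps)
  have "(r * V' - m) * V \<le> max 0 (r * V' - m) * V"
    using assms by (simp add: mult_right_mono)
  with key show "0 < r * V - m \<Longrightarrow> max 0 (r * V - m) * V' < max 0 (r * V' - m) * V"
    by simp
  then show "max 0 (r * V - m) * V' \<le> max 0 (r * V' - m) * V"
    using assms by (cases "0 < r * V - m") (auto simp: max_def)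
qed

lemma hinge_fixpoint_unique:
  fixes m :: "'i \<Rightarrow> real" and r s W W' :: real
  assumes I: "finite I" and m: "\<forall>i\<in>I. 0 < m i" and s: "0 < s"
    and W: "0 < W" "0 < W'"
    and eq: "s * W = (\<Sum>i\<in>I. max 0 (r * W - m i))" and eq': "s * W' = (\<Sum>i\<in>I. max 0 (r * W' - m i))"
  shows "W = W'"
proof -
  have no_less: False if less: "V < V'" and V: "0 < V"
    and fV: "s * V = (\<Sum>i\<in>I. max 0 (r * V - m i))" and fV': "s * V' = (\<Sum>i\<in>I. max 0 (r * V' - m i))"
  for V V'
  proof -
    have "0 < (\<Sum>i\<in>I. max 0 (r * V - m i))"
      using fV s V by (metis mult_pos_pos)
    then obtain i0 where i0: "i0 \<in> I" "0 < max 0 (r * V - m i0)"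
      using sum_nonpos[of I "\<lambda>i. max 0 (r * V - m i)"] by (meson not_less)
    have "(\<Sum>i\<in>I. max 0 (r * V - m i) * V') < (\<Sum>i\<in>I. max 0 (r * V' - m i) * V)"
    proof (rule sum_strict_mono_ex1[OF I])
      show "\<forall>i\<in>I. max 0 (r * V - m i) * V' \<le> max 0 (r * V' - m i) * V"
        using hinge_ratio_mono(1)[OF _ V less] m by blast
      show "\<exists>i\<in>I. max 0 (r * V - m i) * V' < max 0 (r * V' - m i) * V"
        using hinge_ratio_mono(2)[OF _ V less] m i0 by (metis max.strict_order_iff max_def)
    qed
    then have "s * V * V' < s * V' * V"
      by (simp add: fV fV' sum_distrib_right)
    then show False
      by (simp add: algebra_simps)
  qed
  show ?thesis
  proof (cases W W' rule: linorder_cases)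
    case less
    then show ?thesis
      using no_less[OF less W(1) eq eq'] by simp
  next
    case greater
    then show ?thesis
      using no_less[OF greater W(2) eq' eq] by simp
  qed
qed

lemma hinge_fixpoint_exists:
  fixes m :: "'i \<Rightarrow> real" and r s :: real
  assumes I: "finite I" "I \<noteq> {}" and m: "\<forall>i\<in>I. 0 < m i"
    and r: "0 < r" and s: "0 \<le> s" "s < card I * r"
  shows "\<exists>W>0. s * W = (\<Sum>i\<in>I. max 0 (r * W - m i))"
proof -
  define f where "f W = (\<Sum>i\<in>I. max 0 (r * W - m i)) - s * W" for W
  define W0 where "W0 = Min (m ` I) / r"
  define W1 where "W1 = max W0 (sum m I / (card I * r - s))"
  have W0: "0 < W0"
    using I m r by (simp add: W0_def)
  have "f W0 \<le> 0"
  proof -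
    have "r * W0 \<le> m i" if "i \<in> I" for i
      using I r that by (simp add: W0_def)
    then show ?thesis
      using W0 s by (simp add: f_def)
  qed
  moreover have "0 \<le> f W1"
  proof -
    have "sum m I \<le> W1 * (card I * r - s)"
      using s by (simp add: W1_def flip: pos_divide_le_eq)
    then have "0 \<le> (card I * r - s) * W1 - sum m I"
      by (simp add: algebra_simps)
    also have "\<dots> = (\<Sum>i\<in>I. r * W1 - m i) - s * W1"
      by (simp add: sum_subtractf algebra_simps)
    also have "\<dots> \<le> f W1"
      unfolding f_def by (intro diff_right_mono sum_mono) simp
    finally show ?thesis .
  qed
  moreover have "continuous_on {W0..W1} f"
    unfolding f_def by (intro continuous_intros)
  ultimately obtain W where "W0 \<le> W" "f W = 0"
    using IVT'[of f W0 0 W1] by (auto simp: W1_def)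
  then show ?thesis
    using W0 by (intro exI[of _ W]) (simp add: f_def)
qed

section \<open>Barycentric coordinates on a labelled vertex set\<close>

definition bary_simplex :: "'i set \<Rightarrow> ('i \<Rightarrow> real) set" where
  "bary_simplex J = {z. (\<forall>q. q \<notin> J \<longrightarrow> z q = 0) \<and> (\<forall>q\<in>J. 0 \<le> z q) \<and> sum z J = 1}"

definition bary_boundary :: "'i set \<Rightarrow> ('i \<Rightarrow> real) set" where
  "bary_boundary J = {z \<in> bary_simplex J. \<exists>q\<in>J. z q = 0}"

lemma bary_simplex_subset_iff:
  assumes "finite I" "J \<subseteq> I"
  shows "z \<in> bary_simplex J \<longleftrightarrow> z \<in> bary_simplex I \<and> (\<forall>q\<in>I - J. z q = 0)"
proof -
  have "sum z I = sum z J" if "\<forall>q. q \<notin> J \<longrightarrow> z q = 0"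
    using assms that by (intro sum.mono_neutral_right) auto
  moreover have "(\<forall>q. q \<notin> J \<longrightarrow> z q = 0) \<longleftrightarrow> (\<forall>q. q \<notin> I \<longrightarrow> z q = 0) \<and> (\<forall>q\<in>I - J. z q = 0)"
    using assms by blast
  ultimately show ?thesis
    using assms unfolding bary_simplex_def by auto
qed

lemma bary_simplex_perturb:
  assumes J: "finite J" "J \<noteq> {}" and d: "\<forall>q. q \<notin> J \<longrightarrow> d q = 0" "sum d J = 0"
  shows "\<exists>c \<epsilon>. 0 < \<epsilon> \<and> c \<in> bary_simplex J \<and> (\<lambda>q. c q + \<epsilon> * d q) \<in> bary_simplex J"
proof -
  define c where "c q = (if q \<in> J then 1 / card J else 0)" for q
  define M where "M = 1 + (\<Sum>q\<in>J. \<bar>d q\<bar>)"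
  have M: "0 < M"
    by (simp add: M_def add_pos_nonneg sum_nonneg)
  have d_le: "\<bar>d q\<bar> \<le> M" if "q \<in> J" for q
  proof -
    have "\<bar>d q\<bar> \<le> (\<Sum>q\<in>J. \<bar>d q\<bar>)"
      using J(1) that by (intro member_le_sum) auto
    then show ?thesis
      by (simp add: M_def)
  qed
  define \<epsilon> where "\<epsilon> = 1 / (card J * M)"
  have \<epsilon>: "0 < \<epsilon>"
    using J M by (simp add: \<epsilon>_def card_gt_0_iff)
  have nonneg: "0 \<le> c q + \<epsilon> * d q" if "q \<in> J" for q
  proof -
    have "\<epsilon> * \<bar>d q\<bar> \<le> \<epsilon> * M"
      using d_le[OF that] \<epsilon> by (simp add: mult_left_mono)
    also have "\<dots> = c q"
      using M that by (simp add: \<epsilon>_def c_def)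
    finally have "\<epsilon> * \<bar>d q\<bar> \<le> c q" .
    moreover have "- (\<epsilon> * d q) \<le> \<epsilon> * \<bar>d q\<bar>"
      using \<epsilon> abs_ge_minus_self[of "\<epsilon> * d q"] by (simp add: abs_mult)
    ultimately show ?thesis
      by linarith
  qed
  have "sum c J = (\<Sum>q\<in>J. 1 / card J)"
    by (intro sum.cong) (simp_all add: c_def)
  then have c_sum: "sum c J = 1"
    using J by (simp add: card_gt_0_iff)
  have "(\<Sum>q\<in>J. c q + \<epsilon> * d q) = 1"
    using c_sum d(2) by (simp add: sum.distrib flip: sum_distrib_left)
  then show ?thesis
    using \<epsilon> c_sum nonneg d(1) by (intro exI[of _ c] exI[of _ \<epsilon>]) (simp add: bary_simplex_def c_def)
qed

locale labelled_vertices =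
  fixes I :: "'i set" and v :: "'i \<Rightarrow> 'a::euclidean_space"
  assumes finite_labels: "finite I" and inj_on_vertices: "inj_on v I"
begin

definition comb :: "('i \<Rightarrow> real) \<Rightarrow> 'a" where
  "comb z = (\<Sum>q\<in>I. z q *\<^sub>R v q)"

lemma comb_eq_sum_support:
  assumes "J \<subseteq> I" "\<forall>q. q \<notin> J \<longrightarrow> z q = 0"
  shows "comb z = (\<Sum>q\<in>J. z q *\<^sub>R v q)"
  unfolding comb_def using assms by (intro sum.mono_neutral_right finite_labels) auto

lemma comb_linear_combination: "comb (\<lambda>q. u * z q + w * z' q) = u *\<^sub>R comb z + w *\<^sub>R comb z'"
  unfolding comb_def by (simp add: sum.distrib scaleR_add_left scaleR_sum_right)

lemma vertex_weights_iff_label_weights: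
  assumes J: "J \<subseteq> I"
  shows "(\<exists>u. (\<forall>y\<in>v ` J. P (u y)) \<and> sum u (v ` J) = 1 \<and> (\<Sum>y\<in>v ` J. u y *\<^sub>R y) = x) \<longleftrightarrow>
         (\<exists>z. (\<forall>q. q \<notin> J \<longrightarrow> z q = 0) \<and> (\<forall>q\<in>J. P (z q)) \<and> sum z J = 1 \<and> comb z = x)"
proof -
  have inj: "inj_on v J"
    using inj_on_vertices J inj_on_subset by blast
  have reindex: "sum u (v ` J) = sum (u \<circ> v) J" "(\<Sum>y\<in>v ` J. u y *\<^sub>R y) = (\<Sum>q\<in>J. u (v q) *\<^sub>R v q)" for u
    using inj by (simp_all add: sum.reindex)
  show ?thesis
  proof
    assume "\<exists>u. (\<forall>y\<in>v ` J. P (u y)) \<and> sum u (v ` J) = 1 \<and> (\<Sum>y\<in>v ` J. u y *\<^sub>R y) = x"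
    then obtain u where u: "\<forall>y\<in>v ` J. P (u y)" "sum u (v ` J) = 1" "(\<Sum>y\<in>v ` J. u y *\<^sub>R y) = x"
      by blast
    define z where "z q = (if q \<in> J then u (v q) else 0)" for q
    have "comb z = (\<Sum>q\<in>J. u (v q) *\<^sub>R v q)"
      using J by (simp add: comb_eq_sum_support z_def)
    then show "\<exists>z. (\<forall>q. q \<notin> J \<longrightarrow> z q = 0) \<and> (\<forall>q\<in>J. P (z q)) \<and> sum z J = 1 \<and> comb z = x"
      using u reindex by (intro exI[of _ z]) (simp add: z_def)
  next
    assume "\<exists>z. (\<forall>q. q \<notin> J \<longrightarrow> z q = 0) \<and> (\<forall>q\<in>J. P (z q)) \<and> sum z J = 1 \<and> comb z = x"
    then obtain z where z: "\<forall>q. q \<notin> J \<longrightarrow> z q = 0" "\<forall>q\<in>J. P (z q)" "sum z J = 1" "comb z = x"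
      by blast
    define u where "u y = z (inv_into J v y)" for y
    have "u (v q) = z q" if "q \<in> J" for q
      using inj that by (simp add: u_def)
    then show "\<exists>u. (\<forall>y\<in>v ` J. P (u y)) \<and> sum u (v ` J) = 1 \<and> (\<Sum>y\<in>v ` J. u y *\<^sub>R y) = x"
      using z reindex comb_eq_sum_support[OF J z(1)] by (intro exI[of _ u]) (simp cong: sum.cong)
  qed
qed

lemma convex_hull_image_eq:
  assumes J: "J \<subseteq> I"
  shows "convex hull (v ` J) = comb ` bary_simplex J"
proof -
  have "finite (v ` J)"
    using J finite_labels finite_subset by blast
  then have "x \<in> convex hull (v ` J) \<longleftrightarrow>
      (\<exists>u. (\<forall>y\<in>v ` J. 0 \<le> u y) \<and> sum u (v ` J) = 1 \<and> (\<Sum>y\<in>v ` J. u y *\<^sub>R y) = x)" for x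
    by (simp add: convex_hull_finite)
  then show ?thesis
    unfolding vertex_weights_iff_label_weights[OF J] by (auto simp: bary_simplex_def)
qed

lemma rel_interior_convex_hull_image_eq:
  assumes "J \<subseteq> I" "\<not> affine_dependent (v ` J)"
  shows "rel_interior (convex hull (v ` J)) = comb ` {z \<in> bary_simplex J. \<forall>q\<in>J. 0 < z q}"
  unfolding rel_interior_convex_hull_explicit[OF assms(2)] vertex_weights_iff_label_weights[OF assms(1)]
  by (auto simp: bary_simplex_def less_imp_le)

lemma affine_independent_if_inj_on_comb:
  assumes J: "J \<subseteq> I" and inj: "inj_on comb (bary_simplex J)"
  shows "\<not> affine_dependent (v ` J)"
proof
  have finJ: "finite J"
    using J finite_labels finite_subset by blast
  assume "affine_dependent (v ` J)"
  then obtain u where u: "sum u (v ` J) = 0" "\<exists>y\<in>v ` J. u y \<noteq> 0" "(\<Sum>y\<in>v ` J. u y *\<^sub>R y) = 0"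
    unfolding affine_dependent_explicit_finite[OF finite_imageI[OF finJ]] by blast
  define d where "d q = (if q \<in> J then u (v q) else 0)" for q
  have inj_v: "inj_on v J"
    using inj_on_vertices J inj_on_subset by blast
  have "sum d J = sum (u \<circ> v) J"
    by (intro sum.cong) (simp_all add: d_def)
  then have d_sum: "sum d J = 0"
    using u(1) by (simp add: sum.reindex[OF inj_v])
  have "comb d = (\<Sum>q\<in>J. u (v q) *\<^sub>R v q)"
    using J by (simp add: comb_eq_sum_support d_def)
  then have d_comb: "comb d = 0"
    using u(3) by (simp add: sum.reindex[OF inj_v])
  obtain q0 where q0: "q0 \<in> J" "d q0 \<noteq> 0"
    using u(2) by (auto simp: d_def)
  moreover have "\<forall>q. q \<notin> J \<longrightarrow> d q = 0"
    by (simp add: d_def)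
  ultimately obtain c \<epsilon> where \<epsilon>: "0 < \<epsilon>" "c \<in> bary_simplex J" "(\<lambda>q. 1 * c q + \<epsilon> * d q) \<in> bary_simplex J"
    using bary_simplex_perturb[OF finJ _ _ d_sum] by auto
  moreover have "comb (\<lambda>q. 1 * c q + \<epsilon> * d q) = comb c"
    unfolding comb_linear_combination d_comb by simp
  ultimately have "(\<lambda>q. 1 * c q + \<epsilon> * d q) = c"
    using inj by (auto dest: inj_onD)
  then have "\<epsilon> * d q0 = 0"
    by (metis add_cancel_left_right mult_1)
  then show False
    using \<epsilon>(1) q0(2) by simp
qed

lemma rel_frontier_convex_hull_image_eq:
  assumes J: "J \<subseteq> I" and inj: "inj_on comb (bary_simplex J)"
  shows "rel_frontier (convex hull (v ` J)) = comb ` bary_boundary J"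
proof -
  have "compact (convex hull (v ` J))"
    using J finite_labels finite_subset by (blast intro: compact_convex_hull finite_imp_compact)
  then have "rel_frontier (convex hull (v ` J)) = convex hull (v ` J) - rel_interior (convex hull (v ` J))"
    by (simp add: rel_frontier_def compact_imp_closed)
  also have "\<dots> = comb ` bary_simplex J - comb ` {z \<in> bary_simplex J. \<forall>q\<in>J. 0 < z q}"
    unfolding rel_interior_convex_hull_image_eq[OF J affine_independent_if_inj_on_comb[OF J inj]]
    by (simp add: convex_hull_image_eq J)
  also have "\<dots> = comb ` (bary_simplex J - {z \<in> bary_simplex J. \<forall>q\<in>J. 0 < z q})"
    using inj by (simp add: inj_on_image_set_diff)
  also have "bary_simplex J - {z \<in> bary_simplex J. \<forall>q\<in>J. 0 < z q} = bary_boundary J"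
    by (force simp: bary_boundary_def bary_simplex_def)
  finally show ?thesis .
qed

lemma affine_on_barycentric_map:
  assumes J: "J \<subseteq> I" and inj: "inj_on comb (bary_simplex J)" and Z: "Z \<subseteq> bary_simplex J"
    and f: "\<forall>z\<in>Z. f (comb z) = (\<Sum>q\<in>I. z q *\<^sub>R w q)"
  shows "affine_on (comb ` Z) f"
proof -
  have "affine_on (v ` J) (w \<circ> inv_into J v)"
    by (rule affine_on_affine_independent[OF affine_independent_if_inj_on_comb[OF J inj]])
  then obtain h d where h: "linear h" and hd: "\<forall>y\<in>v ` J. w (inv_into J v y) = h y + d"
    unfolding affine_on_def by auto
  have "inj_on v J"
    using inj_on_vertices J inj_on_subset by blast
  then have w: "w q = h (v q) + d" if "q \<in> J" for q
    using hd that by auto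
  have "f (comb z) = h (comb z) + d" if "z \<in> Z" for z
  proof -
    have supp: "\<forall>q. q \<notin> J \<longrightarrow> z q = 0" and one: "sum z J = 1"
      using Z that by (auto simp: bary_simplex_def)
    have "f (comb z) = (\<Sum>q\<in>J. z q *\<^sub>R (h (v q) + d))"
      using f that J supp w by (simp add: sum.mono_neutral_right[OF finite_labels J] cong: sum.cong)
    also have "\<dots> = h (\<Sum>q\<in>J. z q *\<^sub>R v q) + (\<Sum>q\<in>J. z q) *\<^sub>R d"
      by (simp add: scaleR_add_right sum.distrib linear_sum[OF h] linear_cmul[OF h] scaleR_sum_left)
    finally show ?thesis
      using one comb_eq_sum_support[OF J supp] by simp
  qed
  then show ?thesis
    unfolding affine_on_def using h by blast
qed

end

section \<open>The subdivision of the standard simplex\<close>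

lemma UNIV_3_eq: "(UNIV :: 3 set) = {0, 1, 2}"
proof -
  have "t \<in> {0, 1, 2}" for t :: 3
    using exhaust_3[of t] by auto
  then show ?thesis
    by blast
qed

lemma sum_UNIV_3: "sum f (UNIV :: 3 set) = f 0 + f 1 + f 2"
  unfolding UNIV_3_eq by (simp add: add.assoc)

text \<open>The simplifier evaluates arithmetic in the type 3 only up to the numerals 3 and -1.\<close>

lemma numerals_3 [simp]: "(3 :: 3) = 0" "(- 1 :: 3) = 2"
  by simp_all

lemma three_cases [case_names 0 1 2]:
  fixes t :: 3
  obtains "t = 0" | "t = 1" | "t = 2"
  using UNIV_3_eq by blast

locale coordinate_pairing =
  fixes k :: nat and a b :: "nat \<Rightarrow> 'n::finite"
  assumes two_le_k: "2 \<le> k"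
    and inj_on_a: "inj_on a {..<k}" and inj_on_b: "inj_on b {..<k}"
    and a_b_disjoint: "a ` {..<k} \<inter> b ` {..<k} = {}"
    and a_b_cover: "a ` {..<k} \<union> b ` {..<k} = UNIV"
begin

lemma a_eq_iff: "i < k \<Longrightarrow> i' < k \<Longrightarrow> a i = a i' \<longleftrightarrow> i = i'"
  using inj_on_a by (auto dest: inj_onD)

lemma b_eq_iff: "i < k \<Longrightarrow> i' < k \<Longrightarrow> b i = b i' \<longleftrightarrow> i = i'"
  using inj_on_b by (auto dest: inj_onD)

lemma a_ne_b: "i < k \<Longrightarrow> i' < k \<Longrightarrow> a i \<noteq> b i'"
  using a_b_disjoint by blast

lemma b_ne_a: "i < k \<Longrightarrow> i' < k \<Longrightarrow> b i \<noteq> a i'"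
  using a_b_disjoint by blast

lemma coordinate_cases:
  obtains i where "i < k" "j = a i" | i where "i < k" "j = b i"
  using a_b_cover by (metis UNIV_I UnE imageE lessThan_iff)

lemma vec_eq_iff_pairs: "x = y \<longleftrightarrow> (\<forall>i<k. x $ a i = y $ a i \<and> x $ b i = y $ b i)"
  by (metis coordinate_cases vec_eq_iff)

text \<open>The scale s makes the coordinates of every p i sum to 2s(2k - 1) = 1.\<close>

definition s :: real where
  "s = 1 / (2 * (2 * real k - 1))"

lemma s_pos: "0 < s"
  using two_le_k by (simp add: s_def)

lemma s_less_half: "s < 1 / 2"
  using two_le_k by (simp add: s_def field_simps)

lemma s_sum_identity: "2 * s * (2 * real k - 1) = 1"
  using two_le_k by (simp add: s_def)

definition p :: "nat \<Rightarrow> real^'n" where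
  "p i = (\<chi> j. if j = a i \<or> j = b i then s else 2 * s)"

lemma p_nth: "p i $ j = (if j = a i \<or> j = b i then s else 2 * s)"
  by (simp add: p_def)

lemma p_ne_axis: "p i \<noteq> axis j 1"
proof
  assume "p i = axis j 1"
  then have "p i $ j = 1"
    by (simp add: axis_def)
  then show False
    using s_less_half by (simp add: p_nth split: if_splits)
qed

lemma p_eq_iff:
  assumes "i < k" "i' < k"
  shows "p i = p i' \<longleftrightarrow> i = i'"
proof
  assume eq: "p i = p i'"
  show "i = i'"
  proof (rule ccontr)
    assume "i \<noteq> i'"
    then have "p i' $ a i = 2 * s"
      using assms by (simp add: p_nth a_eq_iff a_ne_b)
    moreover have "p i $ a i = s"
      by (simp add: p_nth)
    ultimately show False
      using eq s_pos by simp
  qed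
qed simp

definition labels :: "(nat \<times> 3) set" where
  "labels = {..<k} \<times> UNIV"

lemma sum_labels: "sum f labels = (\<Sum>i<k. f (i, 0) + f (i, 1) + f (i, 2))"
  unfolding labels_def sum.cartesian_product' sum_UNIV_3 ..

definition vert :: "nat \<times> 3 \<Rightarrow> real^'n" where
  "vert q = (case q of (i, t) \<Rightarrow> if t = 0 then p i else if t = 1 then axis (a i) 1 else axis (b i) 1)"

lemma vert_simps [simp]: "vert (i, 0) = p i" "vert (i, 1) = axis (a i) 1" "vert (i, 2) = axis (b i) 1"
  by (simp_all add: vert_def)

lemma inj_on_vert: "inj_on vert labels"
proof (rule inj_onI, clarify)
  fix i t i' t'
  assume "(i, t) \<in> labels" "(i', t') \<in> labels" and eq: "vert (i, t) = vert (i', t')"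
  then have "i < k" "i' < k"
    by (auto simp: labels_def)
  with eq show "i = i' \<and> t = t'"
    by (cases t rule: three_cases; cases t' rule: three_cases)
      (auto simp: p_ne_axis p_ne_axis[symmetric] p_eq_iff axis_eq_axis a_eq_iff b_eq_iff a_ne_b b_ne_a)
qed

sublocale labelled_vertices labels vert
proof
  show "finite labels"
    by (simp add: labels_def)
qed (rule inj_on_vert)

definition weight :: "(nat \<times> 3 \<Rightarrow> real) \<Rightarrow> real" where
  "weight z = (\<Sum>i<k. z (i, 0))"

lemma comb_nth:
  "comb z $ j = (\<Sum>i<k. z (i, 0) * p i $ j + z (i, 1) * axis (a i) 1 $ j + z (i, 2) * axis (b i) 1 $ j)"
  by (simp add: comb_def sum_labels)

lemma comb_nth_a:
  assumes "i0 < k"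
  shows "comb z $ a i0 = z (i0, 1) + 2 * s * weight z - s * z (i0, 0)"
proof -
  have "comb z $ a i0 = (\<Sum>i<k. 2 * s * z (i, 0) - (if i = i0 then s * z (i, 0) - z (i, 1) else 0))"
    unfolding comb_nth using assms
    by (intro sum.cong refl) (auto simp: p_nth axis_def a_eq_iff a_ne_b)
  also have "\<dots> = z (i0, 1) + 2 * s * weight z - s * z (i0, 0)"
    using assms by (simp add: sum_subtractf weight_def sum_distrib_left)
  finally show ?thesis .
qed

lemma comb_nth_b:
  assumes "i0 < k"
  shows "comb z $ b i0 = z (i0, 2) + 2 * s * weight z - s * z (i0, 0)"
proof -
  have "comb z $ b i0 = (\<Sum>i<k. 2 * s * z (i, 0) - (if i = i0 then s * z (i, 0) - z (i, 2) else 0))"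
    unfolding comb_nth using assms
    by (intro sum.cong refl) (auto simp: p_nth axis_def b_eq_iff b_ne_a)
  also have "\<dots> = z (i0, 2) + 2 * s * weight z - s * z (i0, 0)"
    using assms by (simp add: sum_subtractf weight_def sum_distrib_left)
  finally show ?thesis .
qed

lemma bary_labels_nonneg: "z \<in> bary_simplex labels \<Longrightarrow> 0 \<le> z q"
  by (cases q) (fastforce simp: bary_simplex_def)

lemma bary_labels_outside: "z \<in> bary_simplex labels \<Longrightarrow> \<not> i < k \<Longrightarrow> z (i, t) = 0"
  by (auto simp: bary_simplex_def labels_def)

lemma weight_nonneg: "z \<in> bary_simplex labels \<Longrightarrow> 0 \<le> weight z"
  unfolding weight_def by (intro sum_nonneg) (simp add: bary_labels_nonneg)

lemma comb_nonneg: "z \<in> bary_simplex labels \<Longrightarrow> 0 \<le> comb z $ j"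
  unfolding comb_nth using s_pos
  by (auto simp: p_nth axis_def bary_labels_nonneg intro!: sum_nonneg)

definition cell :: "(nat \<Rightarrow> 3) \<Rightarrow> (nat \<times> 3) set" where
  "cell c = {(i, t). i < k \<and> t \<noteq> c i}"

lemma cell_subset: "cell c \<subseteq> labels"
  by (auto simp: cell_def labels_def)

lemma finite_vert_cell: "finite (vert ` cell c)"
  using finite_labels cell_subset by (blast intro: finite_subset)

lemma mem_bary_cell_iff:
  "z \<in> bary_simplex (cell c) \<longleftrightarrow> z \<in> bary_simplex labels \<and> (\<forall>i<k. z (i, c i) = 0)"
  unfolding bary_simplex_subset_iff[OF finite_labels cell_subset]
  by (auto simp: labels_def cell_def)

definition hinge :: "real^'n \<Rightarrow> real \<Rightarrow> nat \<Rightarrow> real" where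
  "hinge x W i = max 0 (2 * s * W - min (x $ a i) (x $ b i))"

text \<open>The unique candidate for the coordinates of x in the subdivision, once the total weight W
  of the interior vertices p i is known.\<close>

definition lift :: "real^'n \<Rightarrow> real \<Rightarrow> nat \<times> 3 \<Rightarrow> real" where
  "lift x W = (\<lambda>(i, t). if i < k then
      if t = 0 then hinge x W i / s
      else if t = 1 then x $ a i - 2 * s * W + hinge x W i
      else x $ b i - 2 * s * W + hinge x W i
    else 0)"

lemma hinge_cell_coords:
  assumes z: "z \<in> bary_simplex (cell c)" and i: "i < k"
  shows "s * z (i, 0) = hinge (comb z) (weight z) i"
proof -
  have zl: "z \<in> bary_simplex labels" and zc: "z (i, c i) = 0"
    using z i by (auto simp: mem_bary_cell_iff)
  have nonneg: "0 \<le> z (i, 0)" "0 \<le> z (i, 1)" "0 \<le> z (i, 2)"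
    using zl by (simp_all add: bary_labels_nonneg)
  have "z (i, 0) = 0 \<or> min (z (i, 1)) (z (i, 2)) = 0"
    using zc nonneg by (cases "c i" rule: three_cases) auto
  moreover have "min (comb z $ a i) (comb z $ b i) = min (z (i, 1)) (z (i, 2)) + 2 * s * weight z - s * z (i, 0)"
    using i by (simp add: comb_nth_a comb_nth_b min_add_distrib_right min_diff_distrib_left)
  ultimately show ?thesis
    using nonneg s_pos by (auto simp: hinge_def max_def)
qed

lemma cell_coords_eq_lift:
  assumes z: "z \<in> bary_simplex (cell c)"
  shows "z = lift (comb z) (weight z)"
proof (rule ext, clarify)
  fix i t
  have zl: "z \<in> bary_simplex labels"
    using z by (simp add: mem_bary_cell_iff)
  show "z (i, t) = lift (comb z) (weight z) (i, t)"
  proof (cases "i < k")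
    case True
    then show ?thesis
      using hinge_cell_coords[OF z True, symmetric] s_pos
      by (cases t rule: three_cases) (simp_all add: lift_def comb_nth_a comb_nth_b)
  qed (simp add: lift_def bary_labels_outside[OF zl])
qed

lemma weight_fixpoint:
  assumes "z \<in> bary_simplex (cell c)"
  shows "s * weight z = (\<Sum>i<k. hinge (comb z) (weight z) i)"
proof -
  have "s * weight z = (\<Sum>i<k. s * z (i, 0))"
    by (simp add: weight_def sum_distrib_left)
  also have "\<dots> = (\<Sum>i<k. hinge (comb z) (weight z) i)"
    using hinge_cell_coords[OF assms] by simp
  finally show ?thesis .
qed

lemma weight_eq_0_if_min_eq_0:
  assumes z: "z \<in> bary_simplex (cell c)" and i: "i < k"
    and m: "min (comb z $ a i) (comb z $ b i) = 0"
  shows "weight z = 0"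
proof -
  have "2 * s * weight z \<le> hinge (comb z) (weight z) i"
    using m by (simp add: hinge_def)
  also have "\<dots> \<le> s * weight z"
    unfolding weight_fixpoint[OF z] using i by (intro member_le_sum) (auto simp: hinge_def)
  finally show ?thesis
    using s_pos weight_nonneg[of z] z by (simp add: mem_bary_cell_iff mult_le_cancel_right1)
qed

lemma min_eq_0_if_weight_eq_0:
  assumes z: "z \<in> bary_simplex (cell c)" and i: "i < k" "c i \<noteq> 0" and W: "weight z = 0"
  shows "min (comb z $ a i) (comb z $ b i) = 0"
proof -
  have zl: "z \<in> bary_simplex labels" and zc: "z (i, c i) = 0"
    using z i by (auto simp: mem_bary_cell_iff)
  have "z (i, 0) = 0"
    using W i sum_nonneg_eq_0_iff[of "{..<k}" "\<lambda>i. z (i, 0)"] bary_labels_nonneg[OF zl]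
    by (simp add: weight_def)
  moreover have "min (z (i, 1)) (z (i, 2)) = 0"
    using zc i(2) bary_labels_nonneg[OF zl, of "(i, 1)"] bary_labels_nonneg[OF zl, of "(i, 2)"]
    by (cases "c i" rule: three_cases) (auto simp: min_def)
  ultimately show ?thesis
    using i W by (simp add: comb_nth_a comb_nth_b)
qed

definition subdiv_coords :: "(nat \<times> 3 \<Rightarrow> real) set" where
  "subdiv_coords = (\<Union>c\<in>{c. \<exists>i<k. c i \<noteq> 0}. bary_simplex (cell c))"

lemma weight_unique:
  assumes z: "z \<in> bary_simplex (cell c)" "i < k" "c i \<noteq> 0"
    and z': "z' \<in> bary_simplex (cell c')" "i' < k" "c' i' \<noteq> 0"
    and eq: "comb z = comb z'"
  shows "weight z = weight z'"
proof (cases "\<exists>j<k. min (comb z $ a j) (comb z $ b j) = 0")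
  case True
  then show ?thesis
    using weight_eq_0_if_min_eq_0[OF z(1)] weight_eq_0_if_min_eq_0[OF z'(1)] eq by metis
next
  case False
  have zl: "z \<in> bary_simplex labels" and zl': "z' \<in> bary_simplex labels"
    using z z' by (simp_all add: mem_bary_cell_iff)
  have m: "\<forall>j\<in>{..<k}. 0 < min (comb z $ a j) (comb z $ b j)"
    using False comb_nonneg[OF zl] by (auto simp: order_less_le)
  have "weight z \<noteq> 0" "weight z' \<noteq> 0"
    using min_eq_0_if_weight_eq_0[OF z] min_eq_0_if_weight_eq_0[OF z'] False z(2) z'(2) eq by metis+
  then have "0 < weight z" "0 < weight z'"
    using weight_nonneg[OF zl] weight_nonneg[OF zl'] by simp_all
  then show ?thesis
    using hinge_fixpoint_unique[OF _ m s_pos] weight_fixpoint[OF z(1)] weight_fixpoint[OF z'(1)] eq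
    by (simp add: hinge_def)
qed

lemma inj_on_comb_subdiv_coords: "inj_on comb subdiv_coords"
proof (rule inj_onI)
  fix z z' assume "z \<in> subdiv_coords" "z' \<in> subdiv_coords" and eq: "comb z = comb z'"
  then obtain c c' i i' where
    z: "z \<in> bary_simplex (cell c)" "i < k" "c i \<noteq> 0" and
    z': "z' \<in> bary_simplex (cell c')" "i' < k" "c' i' \<noteq> 0"
    by (auto simp: subdiv_coords_def)
  show "z = z'"
    using cell_coords_eq_lift[OF z(1)] cell_coords_eq_lift[OF z'(1)] weight_unique[OF z z' eq] eq
    by metis
qed

lemma bary_cell_subset_subdiv_coords: "i < k \<Longrightarrow> c i \<noteq> 0 \<Longrightarrow> bary_simplex (cell c) \<subseteq> subdiv_coords"
  by (auto simp: subdiv_coords_def)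

lemma inj_on_comb_cell: "inj_on comb (bary_simplex (cell c))"
proof (cases "\<exists>i<k. c i \<noteq> 0")
  case True
  then show ?thesis
    using inj_on_subset[OF inj_on_comb_subdiv_coords] bary_cell_subset_subdiv_coords by blast
next
  case False
  have "weight z = 0" if "z \<in> bary_simplex (cell c)" for z
    using False that by (simp add: weight_def mem_bary_cell_iff)
  then show ?thesis
    using cell_coords_eq_lift by (metis inj_onI)
qed

lemma affine_independent_cell: "\<not> affine_dependent (vert ` cell c)"
  by (rule affine_independent_if_inj_on_comb[OF cell_subset inj_on_comb_cell])

lemma lift_row:
  assumes "i < k"
  shows "s * lift x W (i, 0) = hinge x W i"
    and "min (lift x W (i, 1)) (lift x W (i, 2)) = max 0 (min (x $ a i) (x $ b i) - 2 * s * W)"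
  using assms s_pos by (auto simp: lift_def hinge_def min_def max_def)

lemma weight_lift:
  assumes "s * W = (\<Sum>i<k. hinge x W i)"
  shows "weight (lift x W) = W"
proof -
  have "s * weight (lift x W) = (\<Sum>i<k. hinge x W i)"
    unfolding weight_def sum_distrib_left using lift_row(1) by simp
  then have "s * weight (lift x W) = s * W"
    using assms by simp
  then show ?thesis
    using s_pos by simp
qed

lemma comb_lift:
  assumes "s * W = (\<Sum>i<k. hinge x W i)"
  shows "comb (lift x W) = x"
  unfolding vec_eq_iff_pairs using lift_row(1) s_pos
  by (simp add: comb_nth_a comb_nth_b weight_lift[OF assms]) (simp add: lift_def)

lemma sum_lift:
  assumes sum_x: "(\<Sum>i<k. x $ a i + x $ b i) = 1" and W: "s * W = (\<Sum>i<k. hinge x W i)"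
  shows "sum (lift x W) labels = 1"
proof -
  have H: "(\<Sum>i<k. hinge x W i) = s * W"
    using W by simp
  have "sum (lift x W) labels = (\<Sum>i<k. (x $ a i + x $ b i) + (2 * hinge x W i + hinge x W i / s) - 4 * s * W)"
    unfolding sum_labels by (intro sum.cong refl) (simp add: lift_def)
  also have "\<dots> = (\<Sum>i<k. x $ a i + x $ b i) + (2 * (\<Sum>i<k. hinge x W i) + (\<Sum>i<k. hinge x W i) / s)
      - k * (4 * s * W)"
    by (simp add: sum.distrib sum_subtractf sum_distrib_left sum_divide_distrib)
  also have "\<dots> = 1 - W * (2 * s * (2 * real k - 1) - 1)"
    using sum_x H s_pos by (simp add: algebra_simps)
  finally show ?thesis
    by (simp add: s_sum_identity)
qed

lemma subdiv_coordsI: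
  assumes z: "z \<in> bary_simplex labels"
    and rows: "\<forall>i<k. z (i, 0) = 0 \<or> min (z (i, 1)) (z (i, 2)) = 0"
    and i0: "i0 < k" "min (z (i0, 1)) (z (i0, 2)) = 0"
  shows "z \<in> subdiv_coords"
proof -
  define c where "c i = (if z (i, 1) = 0 then 1 else if z (i, 2) = 0 then 2 else 0 :: 3)" for i
  have "z \<in> bary_simplex (cell c)"
    using z rows by (auto simp: mem_bary_cell_iff c_def min_def split: if_splits)
  moreover have "c i0 \<noteq> 0"
    using i0 by (auto simp: c_def min_def split: if_splits)
  ultimately show ?thesis
    using i0 by (auto simp: subdiv_coords_def)
qed

lemma lift_mem_bary_labels:
  assumes sum_x: "(\<Sum>i<k. x $ a i + x $ b i) = 1" and W: "s * W = (\<Sum>i<k. hinge x W i)"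
  shows "lift x W \<in> bary_simplex labels"
proof -
  have "0 \<le> lift x W (i, t)" if "i < k" for i t
  proof -
    have "0 \<le> lift x W (i, 0)"
      using that s_pos by (simp add: lift_def hinge_def)
    moreover have "0 \<le> min (lift x W (i, 1)) (lift x W (i, 2))"
      using lift_row(2)[OF that] by simp
    ultimately show ?thesis
      by (cases t rule: three_cases) auto
  qed
  then show ?thesis
    using sum_lift[OF sum_x W] by (auto simp: bary_simplex_def labels_def lift_def)
qed

lemma lift_mem_subdiv_coords:
  assumes sum_x: "(\<Sum>i<k. x $ a i + x $ b i) = 1" and W: "s * W = (\<Sum>i<k. hinge x W i)"
    and i0: "i0 < k" "min (x $ a i0) (x $ b i0) \<le> 2 * s * W"
  shows "lift x W \<in> subdiv_coords"
proof (rule subdiv_coordsI)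
  show "lift x W \<in> bary_simplex labels"
    by (rule lift_mem_bary_labels[OF sum_x W])
  show "\<forall>i<k. lift x W (i, 0) = 0 \<or> min (lift x W (i, 1)) (lift x W (i, 2)) = 0"
  proof (intro allI impI)
    fix i
    assume i: "i < k"
    show "lift x W (i, 0) = 0 \<or> min (lift x W (i, 1)) (lift x W (i, 2)) = 0"
      using lift_row[OF i, of x W] s_pos
      by (cases "min (x $ a i) (x $ b i) \<le> 2 * s * W") (auto simp: hinge_def max_def)
  qed
  show "min (lift x W (i0, 1)) (lift x W (i0, 2)) = 0"
    using lift_row(2)[OF i0(1)] i0(2) by simp
qed (rule i0(1))

lemma subdiv_coords_exist:
  assumes x: "\<forall>i<k. 0 \<le> x $ a i \<and> 0 \<le> x $ b i" "(\<Sum>i<k. x $ a i + x $ b i) = 1"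
  shows "\<exists>z\<in>subdiv_coords. comb z = x"
proof -
  obtain W i0 where W: "s * W = (\<Sum>i<k. hinge x W i)" and i0: "i0 < k" "min (x $ a i0) (x $ b i0) \<le> 2 * s * W"
  proof (cases "\<exists>i<k. min (x $ a i) (x $ b i) = 0")
    case True
    then obtain i0 where "i0 < k" "min (x $ a i0) (x $ b i0) = 0"
      by blast
    moreover have "(\<Sum>i<k. hinge x 0 i) = 0"
      using x by (simp add: hinge_def)
    ultimately show ?thesis
      using that[of 0 i0] by simp
  next
    case False
    have m: "\<forall>i\<in>{..<k}. 0 < min (x $ a i) (x $ b i)"
      using False x(1) by (auto simp: order_less_le)
    have "\<exists>W>0. s * W = (\<Sum>i\<in>{..<k}. max 0 (2 * s * W - min (x $ a i) (x $ b i)))"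
      by (rule hinge_fixpoint_exists) (use m two_le_k s_pos in \<open>auto simp: lessThan_empty_iff\<close>)
    then obtain W where "0 < W" and W: "s * W = (\<Sum>i<k. hinge x W i)"
      by (auto simp: hinge_def)
    then have "0 < (\<Sum>i<k. hinge x W i)"
      using s_pos by (metis mult_pos_pos)
    then obtain i0 where "i0 < k" "0 < hinge x W i0"
      using sum_nonpos[of "{..<k}" "hinge x W"] by (meson lessThan_iff not_less)
    then show ?thesis
      using that[of W i0] W by (simp add: hinge_def)
  qed
  then show ?thesis
    using lift_mem_subdiv_coords[OF x(2) W i0] comb_lift[OF W] by blast
qed

definition verts :: "3 \<Rightarrow> (real^'n) set" where
  "verts j = vert ` cell (\<lambda>_. j)"

lemma convex_hull_verts: "convex hull (verts j) = comb ` bary_simplex (cell (\<lambda>_. j))"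
  unfolding verts_def by (rule convex_hull_image_eq[OF cell_subset])

lemma verts_0: "verts 0 = range (\<lambda>j. axis j 1)"
proof
  show "verts 0 \<subseteq> range (\<lambda>j. axis j 1)"
  proof
    fix x
    assume "x \<in> verts 0"
    then obtain i t where "t \<noteq> 0" "x = vert (i, t)"
      by (auto simp: verts_def cell_def)
    then show "x \<in> range (\<lambda>j. axis j 1)"
      by (cases t rule: three_cases) auto
  qed
  show "range (\<lambda>j. axis j 1) \<subseteq> verts 0"
  proof clarify
    fix j
    show "axis j 1 \<in> verts 0"
    proof (cases j rule: coordinate_cases)
      case (1 i)
      then have "(i, 1) \<in> cell (\<lambda>_. 0)"
        by (simp add: cell_def)
      then show ?thesis
        unfolding verts_def using 1 by (metis image_eqI vert_simps(2))
    next
      case (2 i)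
      then have "(i, 2) \<in> cell (\<lambda>_. 0)"
        by (simp add: cell_def)
      then show ?thesis
        unfolding verts_def using 2 by (metis image_eqI vert_simps(3))
    qed
  qed
qed

lemma mem_convex_hull_verts_0_iff:
  "x \<in> convex hull (verts 0) \<longleftrightarrow> (\<forall>i<k. 0 \<le> x $ a i \<and> 0 \<le> x $ b i) \<and> (\<Sum>i<k. x $ a i + x $ b i) = 1"
proof
  assume "x \<in> convex hull (verts 0)"
  then obtain z where z: "z \<in> bary_simplex (cell (\<lambda>_. 0))" and x: "x = comb z"
    by (auto simp: convex_hull_verts)
  have zl: "z \<in> bary_simplex labels" and z0: "\<forall>i<k. z (i, 0) = 0"
    using z by (simp_all add: mem_bary_cell_iff)
  then have xz: "x $ a i = z (i, 1)" "x $ b i = z (i, 2)" if "i < k" for i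
    using that by (simp_all add: x comb_nth_a comb_nth_b weight_def)
  have "sum z labels = 1"
    using zl by (simp add: bary_simplex_def)
  then show "(\<forall>i<k. 0 \<le> x $ a i \<and> 0 \<le> x $ b i) \<and> (\<Sum>i<k. x $ a i + x $ b i) = 1"
    using xz z0 bary_labels_nonneg[OF zl] by (simp add: sum_labels)
next
  assume x: "(\<forall>i<k. 0 \<le> x $ a i \<and> 0 \<le> x $ b i) \<and> (\<Sum>i<k. x $ a i + x $ b i) = 1"
  then have W: "s * 0 = (\<Sum>i<k. hinge x 0 i)"
    by (simp add: hinge_def)
  have "lift x 0 \<in> bary_simplex (cell (\<lambda>_. 0))"
    using lift_mem_bary_labels[OF conjunct2[OF x] W] x by (simp add: mem_bary_cell_iff lift_def hinge_def)
  then show "x \<in> convex hull (verts 0)"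
    using comb_lift[OF W] by (metis convex_hull_verts image_eqI)
qed

lemma comb_mem_convex_hull_verts_0:
  assumes z: "z \<in> bary_simplex labels"
  shows "comb z \<in> convex hull (verts 0)"
proof -
  have "(\<Sum>i<k. comb z $ a i + comb z $ b i)
      = (\<Sum>i<k. z (i, 1) + z (i, 2) + 4 * s * weight z - 2 * s * z (i, 0))"
    by (intro sum.cong refl) (simp add: comb_nth_a comb_nth_b)
  also have "\<dots> = (\<Sum>i<k. z (i, 0) + z (i, 1) + z (i, 2)) + weight z * (2 * s * (2 * real k - 1) - 1)"
    by (simp add: sum.distrib sum_subtractf weight_def sum_distrib_left algebra_simps)
  also have "\<dots> = 1"
    using z by (simp add: s_sum_identity bary_simplex_def flip: sum_labels)
  finally show ?thesis
    unfolding mem_convex_hull_verts_0_iff using comb_nonneg[OF z] by simp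
qed

lemma subdiv_coords_subset: "subdiv_coords \<subseteq> bary_simplex labels"
  by (auto simp: subdiv_coords_def mem_bary_cell_iff)

lemma convex_hull_verts_0_eq: "convex hull (verts 0) = comb ` subdiv_coords"
proof
  show "convex hull (verts 0) \<subseteq> comb ` subdiv_coords"
  proof
    fix x
    assume "x \<in> convex hull (verts 0)"
    then obtain z where "z \<in> subdiv_coords" "comb z = x"
      unfolding mem_convex_hull_verts_0_iff using subdiv_coords_exist by blast
    then show "x \<in> comb ` subdiv_coords"
      by blast
  qed
  show "comb ` subdiv_coords \<subseteq> convex hull (verts 0)"
    using comb_mem_convex_hull_verts_0 subdiv_coords_subset by blast
qed

lemma convex_hull_verts_subset: "convex hull (verts j) \<subseteq> convex hull (verts 0)"
proof (cases "j = 0")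
  case False
  have "bary_simplex (cell (\<lambda>_. j)) \<subseteq> subdiv_coords"
    using False two_le_k by (intro bary_cell_subset_subdiv_coords[of 0]) auto
  then show ?thesis
    unfolding convex_hull_verts_0_eq convex_hull_verts[of j] by blast
qed simp

lemma bary_boundary_subset_subdiv_coords: "bary_boundary (cell (\<lambda>_. j)) \<subseteq> subdiv_coords"
proof
  fix z
  assume "z \<in> bary_boundary (cell (\<lambda>_. j))"
  then obtain i t where z: "z \<in> bary_simplex (cell (\<lambda>_. j))" and it: "i < k" "t \<noteq> j" "z (i, t) = 0"
    by (auto simp: bary_boundary_def cell_def)
  show "z \<in> subdiv_coords"
  proof (cases "j = 0")
    case True
    have "z \<in> bary_simplex (cell (\<lambda>i'. if i' = i then t else 0))"
      using z it True by (simp add: mem_bary_cell_iff)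
    then show ?thesis
      using it True bary_cell_subset_subdiv_coords[of i "\<lambda>i'. if i' = i then t else 0"] by auto
  next
    case False
    then show ?thesis
      using z two_le_k bary_cell_subset_subdiv_coords[of 0 "\<lambda>_. j"] by auto
  qed
qed

lemma cell_const: "cell (\<lambda>_. j) = {..<k} \<times> (UNIV - {j})"
  by (auto simp: cell_def)

lemma card_vert_image: "card (vert ` J) = card J" if "J \<subseteq> labels"
  using card_image[OF inj_on_subset[OF inj_on_vert that]] .

lemma simplex_verts_verts: "simplex_verts (2 * k - 1) (verts j)"
proof -
  have "card (UNIV - {j}) = 2"
    by (simp add: card_Diff_singleton)
  then have "card (verts j) = 2 * k"
    unfolding verts_def card_vert_image[OF cell_subset] by (simp add: cell_const card_cartesian_product)
  moreover have "finite (verts j)"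
    unfolding verts_def by (rule finite_vert_cell)
  ultimately show ?thesis
    using two_le_k affine_independent_cell by (simp add: simplex_verts_def verts_def)
qed

lemma verts_Int: "verts j \<inter> verts j' = vert ` (cell (\<lambda>_. j) \<inter> cell (\<lambda>_. j'))"
  unfolding verts_def by (rule inj_on_image_Int[OF inj_on_vert cell_subset cell_subset, symmetric])

lemma card_verts_Int:
  assumes "j \<noteq> j'"
  shows "card (verts j \<inter> verts j') = k"
proof -
  have "card (UNIV - {j, j'}) = 1"
    using assms by (simp add: card_Diff_subset)
  moreover have "cell (\<lambda>_. j) \<inter> cell (\<lambda>_. j') = {..<k} \<times> (UNIV - {j, j'})"
    by (auto simp: cell_def)
  moreover have "cell (\<lambda>_. j) \<inter> cell (\<lambda>_. j') \<subseteq> labels"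
    using cell_subset by blast
  ultimately show ?thesis
    unfolding verts_Int by (simp add: card_vert_image card_cartesian_product)
qed

lemma bary_boundary_Int:
  assumes "j \<noteq> j'"
  shows "bary_boundary (cell (\<lambda>_. j)) \<inter> bary_boundary (cell (\<lambda>_. j'))
    = bary_simplex (cell (\<lambda>_. j) \<inter> cell (\<lambda>_. j'))"
proof -
  have sub: "cell (\<lambda>_. j) \<inter> cell (\<lambda>_. j') \<subseteq> labels"
    using cell_subset by blast
  have Int_iff: "z \<in> bary_simplex (cell (\<lambda>_. j) \<inter> cell (\<lambda>_. j'))
      \<longleftrightarrow> z \<in> bary_simplex (cell (\<lambda>_. j)) \<and> z \<in> bary_simplex (cell (\<lambda>_. j'))" for z
  proof -
    have "z \<in> bary_simplex (cell (\<lambda>_. j) \<inter> cell (\<lambda>_. j'))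
        \<longleftrightarrow> z \<in> bary_simplex labels \<and> (\<forall>q\<in>labels - cell (\<lambda>_. j) \<inter> cell (\<lambda>_. j'). z q = 0)"
      by (rule bary_simplex_subset_iff[OF finite_labels sub])
    also have "\<dots> \<longleftrightarrow> z \<in> bary_simplex (cell (\<lambda>_. j)) \<and> z \<in> bary_simplex (cell (\<lambda>_. j'))"
      unfolding mem_bary_cell_iff by (auto simp: labels_def cell_def)
    finally show ?thesis .
  qed
  have wit: "(0, j') \<in> cell (\<lambda>_. j)" "(0, j) \<in> cell (\<lambda>_. j')"
    using assms two_le_k by (auto simp: cell_def)
  have both: "z \<in> bary_boundary (cell (\<lambda>_. j)) \<and> z \<in> bary_boundary (cell (\<lambda>_. j'))"
    if "z \<in> bary_simplex (cell (\<lambda>_. j)) \<and> z \<in> bary_simplex (cell (\<lambda>_. j'))" for z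
  proof -
    have "z (0, j') = 0" "z (0, j) = 0"
      using that two_le_k by (simp_all add: mem_bary_cell_iff)
    then show ?thesis
      using that wit unfolding bary_boundary_def by blast
  qed
  show ?thesis
  proof (rule set_eqI)
    fix z
    show "z \<in> bary_boundary (cell (\<lambda>_. j)) \<inter> bary_boundary (cell (\<lambda>_. j'))
        \<longleftrightarrow> z \<in> bary_simplex (cell (\<lambda>_. j) \<inter> cell (\<lambda>_. j'))"
      using Int_iff[of z] both[of z] by (auto simp: bary_boundary_def)
  qed
qed

lemma rel_frontier_verts: "rel_frontier (convex hull (verts j)) = comb ` bary_boundary (cell (\<lambda>_. j))"
  unfolding verts_def by (rule rel_frontier_convex_hull_image_eq[OF cell_subset inj_on_comb_cell])

lemma rel_frontier_verts_Int:
  assumes "j \<noteq> j'"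
  shows "rel_frontier (convex hull (verts j)) \<inter> rel_frontier (convex hull (verts j'))
    = convex hull (verts j \<inter> verts j')"
proof -
  have "rel_frontier (convex hull (verts j)) \<inter> rel_frontier (convex hull (verts j'))
      = comb ` (bary_boundary (cell (\<lambda>_. j)) \<inter> bary_boundary (cell (\<lambda>_. j')))"
    unfolding rel_frontier_verts
    by (rule inj_on_image_Int[OF inj_on_comb_subdiv_coords bary_boundary_subset_subdiv_coords
          bary_boundary_subset_subdiv_coords, symmetric])
  also have "\<dots> = convex hull (verts j \<inter> verts j')"
    using cell_subset by (simp add: bary_boundary_Int[OF assms] verts_Int convex_hull_image_eq le_infI1)
  finally show ?thesis .
qed

lemma rel_interior_verts_1_2_disjoint:
  "rel_interior (convex hull (verts 1)) \<inter> rel_interior (convex hull (verts 2)) = {}"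
proof -
  define P where "P j = {z \<in> bary_simplex (cell (\<lambda>_. j)). \<forall>q\<in>cell (\<lambda>_. j). 0 < z q}" for j :: 3
  have P: "P j \<subseteq> subdiv_coords" if "j \<noteq> 0" for j
    using that two_le_k bary_cell_subset_subdiv_coords[of 0 "\<lambda>_. j"] by (auto simp: P_def)
  have "rel_interior (convex hull (verts j)) = comb ` P j" for j
    unfolding verts_def P_def
    by (rule rel_interior_convex_hull_image_eq[OF cell_subset affine_independent_cell])
  moreover have "P 1 \<inter> P 2 = {}"
  proof -
    have "(0, 2) \<in> cell (\<lambda>_. 1)"
      using two_le_k by (simp add: cell_def)
    then have "0 < z (0, 2)" if "z \<in> P 1" for z
      using that by (simp add: P_def)
    moreover have "z (0, 2) = 0" if "z \<in> P 2" for z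
      using that two_le_k by (simp add: P_def mem_bary_cell_iff)
    ultimately show ?thesis
      by force
  qed
  ultimately show ?thesis
    using inj_on_image_Int[OF inj_on_comb_subdiv_coords P[of 1] P[of 2]] by simp
qed

definition rotate_coords :: "(nat \<times> 3 \<Rightarrow> real) \<Rightarrow> nat \<times> 3 \<Rightarrow> real" where
  "rotate_coords z = (\<lambda>(i, t). z (i, t - 1))"

lemma rotate_coords_apply [simp]: "rotate_coords z (i, t) = z (i, t - 1)"
  by (simp add: rotate_coords_def)

lemma rotate_coords_cell:
  assumes "z \<in> bary_simplex (cell c)"
  shows "rotate_coords z \<in> bary_simplex (cell (\<lambda>i. c i + 1))"
proof -
  have z: "z \<in> bary_simplex labels" "\<forall>i<k. z (i, c i) = 0"
    using assms by (simp_all add: mem_bary_cell_iff)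
  have "sum (rotate_coords z) labels = sum z labels"
    by (simp add: sum_labels ac_simps)
  then have "rotate_coords z \<in> bary_simplex labels"
    using z(1) bary_labels_nonneg[OF z(1)] bary_labels_outside[OF z(1)]
    by (auto simp: bary_simplex_def labels_def)
  then show ?thesis
    using z(2) by (simp add: mem_bary_cell_iff)
qed

lemma rotate_coords_boundary:
  assumes "z \<in> bary_boundary (cell c)"
  shows "rotate_coords z \<in> bary_boundary (cell (\<lambda>i. c i + 1))"
proof -
  obtain i t where z: "z \<in> bary_simplex (cell c)" and it: "i < k" "t \<noteq> c i" "z (i, t) = 0"
    using assms by (auto simp: bary_boundary_def cell_def)
  then have "(i, t + 1) \<in> cell (\<lambda>i. c i + 1)" "rotate_coords z (i, t + 1) = 0"
    by (simp_all add: cell_def)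
  then show ?thesis
    unfolding bary_boundary_def using rotate_coords_cell[OF z] by blast
qed

lemma rotate_coords_3 [simp]: "rotate_coords (rotate_coords (rotate_coords z)) = z"
proof (rule ext, clarify)
  fix i and t :: 3
  have "t - 1 - 1 - 1 = t"
    by (simp add: algebra_simps)
  then show "rotate_coords (rotate_coords (rotate_coords z)) (i, t) = z (i, t)"
    by simp
qed

lemma rotate_coords_image_boundary:
  "rotate_coords ` bary_boundary (cell (\<lambda>_. j)) = bary_boundary (cell (\<lambda>_. j + 1))"
proof
  show "rotate_coords ` bary_boundary (cell (\<lambda>_. j)) \<subseteq> bary_boundary (cell (\<lambda>_. j + 1))"
    using rotate_coords_boundary by blast
  show "bary_boundary (cell (\<lambda>_. j + 1)) \<subseteq> rotate_coords ` bary_boundary (cell (\<lambda>_. j))"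
  proof
    fix w
    assume "w \<in> bary_boundary (cell (\<lambda>_. j + 1))"
    then have "rotate_coords (rotate_coords w) \<in> bary_boundary (cell (\<lambda>_. j + 1 + 1 + 1))"
      using rotate_coords_boundary by blast
    moreover have "j + 1 + 1 + 1 = j"
      by (simp add: add.assoc)
    ultimately show "w \<in> rotate_coords ` bary_boundary (cell (\<lambda>_. j))"
      using rotate_coords_3[of w] by (metis image_eqI)
  qed
qed

text \<open>sigma is the simplicial map of the subdivision induced by the label rotation t \<mapsto> t + 1,
  i.e. p i \<mapsto> e (a i) \<mapsto> e (b i) \<mapsto> p i; outside Delta_0 the description coords_of is junk.\<close>

definition coords_of :: "real^'n \<Rightarrow> nat \<times> 3 \<Rightarrow> real" where
  "coords_of x = (THE z. z \<in> subdiv_coords \<and> comb z = x)"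

definition sigma :: "real^'n \<Rightarrow> real^'n" where
  "sigma x = comb (rotate_coords (coords_of x))"

lemma sigma_comb:
  assumes "z \<in> subdiv_coords"
  shows "sigma (comb z) = comb (rotate_coords z)"
proof -
  have "coords_of (comb z) = z"
    unfolding coords_of_def using assms inj_on_comb_subdiv_coords
    by (intro the1_equality) (auto dest: inj_onD)
  then show ?thesis
    by (simp add: sigma_def)
qed

lemma comb_rotate_coords: "comb (rotate_coords z) = (\<Sum>q\<in>labels. z q *\<^sub>R vert (fst q, snd q + 1))"
  by (simp add: comb_def sum_labels ac_simps)

lemma affine_on_sigma:
  assumes "Z \<subseteq> bary_simplex (cell c)" "Z \<subseteq> subdiv_coords"
  shows "affine_on (comb ` Z) sigma"
  using assms sigma_comb comb_rotate_coords
  by (intro affine_on_barycentric_map[OF cell_subset inj_on_comb_cell]) auto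

lemma sigma_image_rel_frontier:
  "sigma ` rel_frontier (convex hull (verts j)) = rel_frontier (convex hull (verts (j + 1)))"
proof -
  have "sigma ` comb ` bary_boundary (cell (\<lambda>_. j)) = comb ` rotate_coords ` bary_boundary (cell (\<lambda>_. j))"
    using bary_boundary_subset_subdiv_coords sigma_comb by (force simp: image_image intro!: image_cong)
  then show ?thesis
    by (simp add: rel_frontier_verts rotate_coords_image_boundary)
qed

lemma affine_on_sigma_rel_frontier: "affine_on (rel_frontier (convex hull (verts j))) sigma"
  unfolding rel_frontier_verts
  by (rule affine_on_sigma[OF _ bary_boundary_subset_subdiv_coords]) (auto simp: bary_boundary_def)

definition mixed_labelings :: "(nat \<Rightarrow> 3) set" where
  "mixed_labelings = {c. \<exists>i<k. \<exists>i'<k. c i \<noteq> c i'}"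

definition Omega :: "(real^'n) set" where
  "Omega = (\<Union>c\<in>mixed_labelings. convex hull (vert ` cell c))"

lemma bary_mixed_subset_subdiv_coords:
  assumes "c \<in> mixed_labelings"
  shows "bary_simplex (cell c) \<subseteq> subdiv_coords"
proof -
  obtain i i' where "i < k" "i' < k" "c i \<noteq> c i'"
    using assms by (auto simp: mixed_labelings_def)
  then show ?thesis
    by (metis bary_cell_subset_subdiv_coords)
qed

definition Omega_coords :: "(nat \<times> 3 \<Rightarrow> real) set" where
  "Omega_coords = (\<Union>c\<in>mixed_labelings. bary_simplex (cell c))"

lemma Omega_eq: "Omega = comb ` Omega_coords"
  unfolding Omega_def Omega_coords_def image_UN by (simp add: convex_hull_image_eq[OF cell_subset])

lemma sigma_comb_Omega_coords:
  assumes "z \<in> Omega_coords"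
  shows "sigma (comb z) = comb (rotate_coords z)" and "rotate_coords z \<in> Omega_coords"
proof -
  obtain c where c: "c \<in> mixed_labelings" and z: "z \<in> bary_simplex (cell c)"
    using assms by (auto simp: Omega_coords_def)
  show "sigma (comb z) = comb (rotate_coords z)"
    using z bary_mixed_subset_subdiv_coords[OF c] sigma_comb by blast
  have "(\<lambda>i. c i + 1) \<in> mixed_labelings"
    using c by (auto simp: mixed_labelings_def)
  then show "rotate_coords z \<in> Omega_coords"
    using rotate_coords_cell[OF z] by (auto simp: Omega_coords_def)
qed

lemma sigma_Omega:
  assumes "x \<in> Omega"
  shows "sigma x \<in> Omega" and "sigma (sigma (sigma x)) = x"
proof -
  obtain z where z: "z \<in> Omega_coords" and x: "x = comb z"
    using assms by (auto simp: Omega_eq)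
  show "sigma x \<in> Omega"
    using z by (simp add: x Omega_eq sigma_comb_Omega_coords)
  show "sigma (sigma (sigma x)) = x"
    using z by (simp add: x sigma_comb_Omega_coords)
qed

lemma finite_cells: "finite (cell ` C)"
  by (rule finite_subset[of _ "Pow labels"]) (use cell_subset finite_labels in auto)

lemma Omega_Union: "Omega = (\<Union>J\<in>cell ` mixed_labelings. convex hull (vert ` J))"
  by (simp add: Omega_def image_image)

lemma closed_Omega: "closed Omega"
  unfolding Omega_Union
  by (intro closed_UN finite_cells ballI compact_imp_closed compact_convex_hull finite_imp_compact)
    (auto simp: finite_vert_cell)

lemma continuous_on_sigma: "continuous_on Omega sigma"
  unfolding Omega_Union
proof (rule continuous_on_closed_Union)
  fix J
  assume "J \<in> cell ` mixed_labelings"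
  then obtain c where c: "c \<in> mixed_labelings" and J: "J = cell c"
    by auto
  show "closed (convex hull (vert ` J))"
    unfolding J by (intro compact_imp_closed compact_convex_hull finite_imp_compact finite_vert_cell)
  show "continuous_on (convex hull (vert ` J)) sigma"
    unfolding J convex_hull_image_eq[OF cell_subset]
    by (intro affine_on_imp_continuous_on affine_on_sigma[OF order_refl bary_mixed_subset_subdiv_coords[OF c]])
qed (simp add: finite_cells)

lemma homeomorphism_sigma: "homeomorphism Omega Omega sigma (sigma \<circ> sigma)"
proof -
  have image: "sigma ` Omega = Omega"
  proof
    show "sigma ` Omega \<subseteq> Omega"
      using sigma_Omega(1) by blast
    show "Omega \<subseteq> sigma ` Omega"
      using sigma_Omega by (metis image_eqI subsetI)
  qed
  moreover have "continuous_on Omega (sigma \<circ> sigma)"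
    using continuous_on_compose[of Omega sigma sigma] continuous_on_sigma image by simp
  moreover have "(sigma \<circ> sigma) ` Omega = Omega"
    using image by (metis image_comp)
  ultimately show ?thesis
    unfolding homeomorphism_def using continuous_on_sigma sigma_Omega(2) by simp
qed

lemma pl_on_sigma: "pl_on Omega sigma"
  unfolding pl_on_def
proof (intro exI conjI)
  have "(\<lambda>c. vert ` cell c) ` mixed_labelings = (\<lambda>J. vert ` J) ` cell ` mixed_labelings"
    by (simp add: image_image)
  then show "finite ((\<lambda>c. vert ` cell c) ` mixed_labelings)"
    using finite_cells by simp
  show "\<forall>W\<in>(\<lambda>c. vert ` cell c) ` mixed_labelings.
      finite W \<and> W \<noteq> {} \<and> \<not> affine_dependent W \<and> affine_on (convex hull W) sigma"
  proof clarify
    fix c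
    assume c: "c \<in> mixed_labelings"
    have "(0, c 0 + 1) \<in> cell c"
      using two_le_k by (simp add: cell_def)
    moreover have "affine_on (convex hull (vert ` cell c)) sigma"
      unfolding convex_hull_image_eq[OF cell_subset]
      by (rule affine_on_sigma[OF order_refl bary_mixed_subset_subdiv_coords[OF c]])
    ultimately show "finite (vert ` cell c) \<and> vert ` cell c \<noteq> {} \<and> \<not> affine_dependent (vert ` cell c)
        \<and> affine_on (convex hull (vert ` cell c)) sigma"
      using finite_vert_cell affine_independent_cell by blast
  qed
  show "\<Union> ((\<lambda>W. convex hull W) ` (\<lambda>c. vert ` cell c) ` mixed_labelings) = Omega"
    by (simp add: Omega_Union image_image)
qed

lemma sigma_not_id: "\<exists>x\<in>Omega. sigma x \<noteq> x"
proof -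
  define z where "z q = (if q = (0, 0) then 1 else 0 :: real)" for q :: "nat \<times> 3"
  define c where "c i = (if i = 0 then 1 else 0 :: 3)" for i :: nat
  have c: "c \<in> mixed_labelings"
    using two_le_k by (auto simp: mixed_labelings_def c_def intro!: exI[of _ 0] exI[of _ 1])
  have "sum z labels = 1"
    using two_le_k by (simp add: sum_labels z_def)
  then have "z \<in> bary_simplex labels"
    using two_le_k by (auto simp: bary_simplex_def z_def labels_def)
  then have z: "z \<in> bary_simplex (cell c)"
    by (simp add: mem_bary_cell_iff z_def c_def)
  have delta: "(\<Sum>i<k. (if i = 0 then 1 else 0) *\<^sub>R v i) = v 0" for v :: "nat \<Rightarrow> real^'n"
  proof -
    have "(\<Sum>i<k. (if i = 0 then 1 else 0) *\<^sub>R v i) = (\<Sum>i<k. if i = 0 then v i else 0)"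
      by (intro sum.cong) auto
    also have "\<dots> = v 0"
      using two_le_k by (simp add: sum.delta)
    finally show ?thesis .
  qed
  have comb_z: "comb z = p 0" "comb (rotate_coords z) = axis (a 0) 1"
    using delta[of p] delta[of "\<lambda>i. axis (a i) 1"] by (simp_all add: comb_def sum_labels z_def)
  have zO: "z \<in> Omega_coords"
    using c z by (auto simp: Omega_coords_def)
  show ?thesis
  proof (rule bexI)
    have "sigma (comb z) = axis (a 0) 1"
      using sigma_comb_Omega_coords(1)[OF zO] comb_z(2) by simp
    then show "sigma (comb z) \<noteq> comb z"
      using comb_z(1) p_ne_axis by metis
    show "comb z \<in> Omega"
      using zO by (simp add: Omega_eq)
  qed
qed

lemma comb_mem_convex_hull_verts_iff:
  assumes "z \<in> subdiv_coords" "j \<noteq> 0"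
  shows "comb z \<in> convex hull (verts j) \<longleftrightarrow> z \<in> bary_simplex (cell (\<lambda>_. j))"
  unfolding convex_hull_verts using assms two_le_k bary_cell_subset_subdiv_coords[of 0 "\<lambda>_. j"]
  by (intro inj_on_image_mem_iff[OF inj_on_comb_subdiv_coords]) auto

lemma rel_interior_mixed_cell_subset:
  assumes c: "c \<in> mixed_labelings"
  shows "rel_interior (convex hull (vert ` cell c))
    \<subseteq> convex hull (verts 0) - convex hull (verts 1) - convex hull (verts 2)"
proof
  fix x
  assume "x \<in> rel_interior (convex hull (vert ` cell c))"
  then obtain z where z: "z \<in> bary_simplex (cell c)" "\<forall>q\<in>cell c. 0 < z q" and x: "x = comb z"
    unfolding rel_interior_convex_hull_image_eq[OF cell_subset affine_independent_cell] by blast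
  have zs: "z \<in> subdiv_coords"
    using z(1) bary_mixed_subset_subdiv_coords[OF c] by blast
  obtain i i' where i: "i < k" "i' < k" "c i \<noteq> c i'"
    using c by (auto simp: mixed_labelings_def)
  have "z \<notin> bary_simplex (cell (\<lambda>_. j))" for j
  proof
    assume "z \<in> bary_simplex (cell (\<lambda>_. j))"
    then have "z (i, j) = 0" "z (i', j) = 0"
      using i by (simp_all add: mem_bary_cell_iff)
    moreover have "(i, j) \<in> cell c \<or> (i', j) \<in> cell c"
      using i by (auto simp: cell_def)
    ultimately show False
      using z(2) by force
  qed
  then show "x \<in> convex hull (verts 0) - convex hull (verts 1) - convex hull (verts 2)"
    using zs by (simp add: x comb_mem_convex_hull_verts_iff convex_hull_verts_0_eq)
qed

lemma Delta_diff_subset_Omega: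
  "convex hull (verts 0) - convex hull (verts 1) - convex hull (verts 2) \<subseteq> Omega"
proof
  fix x
  assume x: "x \<in> convex hull (verts 0) - convex hull (verts 1) - convex hull (verts 2)"
  then obtain z where zs: "z \<in> subdiv_coords" and xz: "x = comb z"
    by (auto simp: convex_hull_verts_0_eq)
  then obtain c i where z: "z \<in> bary_simplex (cell c)" and i: "i < k" "c i \<noteq> 0"
    unfolding subdiv_coords_def by blast
  have "c \<in> mixed_labelings"
  proof (rule ccontr)
    assume "c \<notin> mixed_labelings"
    then have "\<forall>i'<k. c i' = c i"
      using i unfolding mixed_labelings_def by blast
    then have "z \<in> bary_simplex (cell (\<lambda>_. c i))"
      using z by (simp add: mem_bary_cell_iff)
    then have "x \<in> convex hull (verts (c i))"
      by (simp add: xz convex_hull_verts)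
    moreover have "x \<notin> convex hull (verts 1)" "x \<notin> convex hull (verts 2)"
      using x by simp_all
    ultimately show False
      using i(2) by (cases "c i" rule: three_cases) simp_all
  qed
  then have "z \<in> Omega_coords"
    using z by (auto simp: Omega_coords_def)
  then show "x \<in> Omega"
    by (simp add: Omega_eq xz)
qed

lemma closure_Delta_diff:
  "closure (convex hull (verts 0) - convex hull (verts 1) - convex hull (verts 2)) = Omega"
proof
  show "closure (convex hull (verts 0) - convex hull (verts 1) - convex hull (verts 2)) \<subseteq> Omega"
    by (rule closure_minimal[OF Delta_diff_subset_Omega closed_Omega])
  show "Omega \<subseteq> closure (convex hull (verts 0) - convex hull (verts 1) - convex hull (verts 2))"
    unfolding Omega_def
  proof (rule UN_least)
    fix c
    assume c: "c \<in> mixed_labelings"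
    have "compact (convex hull (vert ` cell c))"
      by (intro compact_convex_hull finite_imp_compact finite_vert_cell)
    then have "convex hull (vert ` cell c) = closure (rel_interior (convex hull (vert ` cell c)))"
      by (simp add: convex_closure_rel_interior compact_imp_closed)
    also have "\<dots> \<subseteq> closure (convex hull (verts 0) - convex hull (verts 1) - convex hull (verts 2))"
      by (intro closure_mono rel_interior_mixed_cell_subset c)
    finally show "convex hull (vert ` cell c)
        \<subseteq> closure (convex hull (verts 0) - convex hull (verts 1) - convex hull (verts 2))" .
  qed
qed

theorem modular_block_verts: "modular_block k (verts 0) (verts 1) (verts 2) sigma"
proof -
  have images:
    "sigma ` rel_frontier (convex hull (verts 0)) = rel_frontier (convex hull (verts 1))"
    "sigma ` rel_frontier (convex hull (verts 1)) = rel_frontier (convex hull (verts 2))"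
    "sigma ` rel_frontier (convex hull (verts 2)) = rel_frontier (convex hull (verts 0))"
    using sigma_image_rel_frontier[of 0] sigma_image_rel_frontier[of 1] sigma_image_rel_frontier[of 2]
    by simp_all
  show ?thesis
    unfolding modular_block_def Let_def
    by (simp add: simplex_verts_verts[simplified] convex_hull_verts_subset rel_interior_verts_1_2_disjoint
        card_verts_Int rel_frontier_verts_Int closure_Delta_diff homeomorphism_sigma sigma_Omega(2)
        sigma_not_id pl_on_sigma affine_on_sigma_rel_frontier images)
qed

end

lemma lessThan_double_eq: "{..<2 * (k :: nat)} = {..<k} \<union> (\<lambda>i. i + k) ` {..<k}"
proof
  have upper: "m \<in> (\<lambda>i. i + k) ` {..<k}" if "k \<le> m" "m < 2 * k" for m
    using that by (intro image_eqI[of _ _ "m - k"]) auto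
  show "{..<2 * k} \<subseteq> {..<k} \<union> (\<lambda>i. i + k) ` {..<k}"
  proof
    fix m
    assume "m \<in> {..<2 * k}"
    then show "m \<in> {..<k} \<union> (\<lambda>i. i + k) ` {..<k}"
      using upper[of m] by (cases "m < k") auto
  qed
qed auto

lemma coordinate_pairing_exists:
  assumes "2 \<le> k" "CARD('n::finite) = 2 * k"
  shows "\<exists>a b :: nat \<Rightarrow> 'n. coordinate_pairing k a b"
proof -
  obtain idx :: "nat \<Rightarrow> 'n" where idx: "bij_betw idx {..<2 * k} UNIV"
    using ex_bij_betw_nat_finite[of "UNIV :: 'n set"] assms(2) by (auto simp: atLeast0LessThan)
  then have inj: "inj_on idx {..<2 * k}"
    by (rule bij_betw_imp_inj_on)
  have "coordinate_pairing k idx (\<lambda>i. idx (i + k))"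
  proof
    show "inj_on idx {..<k}"
      using inj by (rule inj_on_subset) auto
    show "inj_on (\<lambda>i. idx (i + k)) {..<k}"
    proof (rule inj_onI)
      fix i i'
      assume "i \<in> {..<k}" "i' \<in> {..<k}" "idx (i + k) = idx (i' + k)"
      then have "i + k = i' + k"
        by (intro inj_onD[OF inj]) auto
      then show "i = i'"
        by simp
    qed
    show "idx ` {..<k} \<inter> (\<lambda>i. idx (i + k)) ` {..<k} = {}"
      using inj by (fastforce simp: inj_on_def)
    show "idx ` {..<k} \<union> (\<lambda>i. idx (i + k)) ` {..<k} = UNIV"
      using bij_betw_imp_surj_on[OF idx] by (simp add: lessThan_double_eq image_Un image_image)
  qed (rule assms(1))
  then show ?thesis
    by blast
qed

theorem mainTheorem5:
  fixes k :: nat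
  assumes "k \<ge> 2" and "CARD('n::finite) = 2 * k"
  shows "\<exists>(V1 :: (real^'n) set) V2 \<sigma>.
           modular_block k (range (\<lambda>i::'n. axis i 1)) V1 V2 \<sigma>"
proof -
  obtain a b :: "nat \<Rightarrow> 'n" where "coordinate_pairing k a b"
    using coordinate_pairing_exists[OF assms] by blast
  then interpret coordinate_pairing k a b .
  show ?thesis
    using modular_block_verts verts_0 by metis
qed

end
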